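(* Let $(B,\lfloor\cdot,\cdot\rfloor,\|\cdot\|)$ be an SSDB space, $q(b):=\tfrac12\lfloor b,b\rfloor$, let $f\colon B\to\,]{-}\infty,\infty]$ be a proper convex lower semicontinuous BC--function and $g\colon B\to\,]{-}\infty,\infty]$ a proper convex lower semicontinuous TBC--function. Then $\mathrm{dom}\,f-\mathrm{dom}\,g=B$ if and only if ${\cal P}_q(f)-{\cal N}_q(g)=B$.
   Context: An SSDB space is a triple $(B,\lfloor\cdot,\cdot\rfloor,\|\cdot\|)$ where $B$ is a nonzero real vector space, $\lfloor\cdot,\cdot\rfloor$ a symmetric bilinear form, $(B,\|\cdot\|)$ a Banach space, and there is a linear isometry $\iota$ of $B$ onto $B^*$ with $\langle b,\iota(c)\rangle=\lfloor b,c\rfloor$. $\mathrm{dom}\,f:=\{b\colon f(b)\in\mathbb{R}\}$, $f^@(c):=\sup_{b}[\lfloor b,c\rfloor-f(b)]$. A BC--function is a proper convex $f$ with $f^@(b)\ge f(b)\ge q(b)$ for all $b$; a TBC--function is a proper convex $g$ with $g^@(-b)\ge g(b)\ge -q(b)$ for all $b$. ${\cal P}_q(f):=\{b\colon f(b)=q(b)\}$, ${\cal N}_q(g):=\{b\colon g(b)=-q(b)\}$. *)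

theory Defs
  imports "HOL-Analysis.Analysis" "HOL-Library.Extended_Real"
begin

definition SSDB :: "('a::banach \<Rightarrow> 'a \<Rightarrow> real) \<Rightarrow> bool" where
  "SSDB bf \<longleftrightarrow> (\<exists>b::'a. b \<noteq> 0) \<and> bilinear bf \<and> (\<forall>b c. bf b c = bf c b) \<and>
     (\<exists>\<iota> :: 'a \<Rightarrow> ('a \<Rightarrow>\<^sub>L real). linear \<iota> \<and> surj \<iota> \<and>
        (\<forall>c. norm (\<iota> c) = norm c) \<and> (\<forall>b c. blinfun_apply (\<iota> c) b = bf b c))"

definition qf :: "('a \<Rightarrow> 'a \<Rightarrow> real) \<Rightarrow> 'a \<Rightarrow> real" where
  "qf bf b = bf b b / 2"

text \<open>Functions B \<rightarrow> ]-\<infinity>,\<infinity>] are modelled as ereal-valued functions never equal to -\<infinity>.\<close>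
definition proper_fn :: "('a \<Rightarrow> ereal) \<Rightarrow> bool" where
  "proper_fn f \<longleftrightarrow> (\<forall>x. f x \<noteq> -\<infinity>) \<and> (\<exists>x. f x \<noteq> \<infinity>)"

definition convex_fn :: "('a::real_vector \<Rightarrow> ereal) \<Rightarrow> bool" where
  "convex_fn f \<longleftrightarrow> (\<forall>x y t. 0 < t \<and> t < 1 \<longrightarrow>
      f (t *\<^sub>R x + (1 - t) *\<^sub>R y) \<le> ereal t * f x + ereal (1 - t) * f y)"

definition lsc_fn :: "('a::topological_space \<Rightarrow> ereal) \<Rightarrow> bool" where
  "lsc_fn f \<longleftrightarrow> (\<forall>r::real. closed {x. f x \<le> ereal r})"

definition dom_fn :: "('a \<Rightarrow> ereal) \<Rightarrow> 'a set" where
  "dom_fn f = {b. \<exists>r. f b = ereal r}"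

definition conj_at :: "('a \<Rightarrow> 'a \<Rightarrow> real) \<Rightarrow> ('a \<Rightarrow> ereal) \<Rightarrow> 'a \<Rightarrow> ereal" where
  "conj_at bf f c = (SUP b. ereal (bf b c) - f b)"

definition BC_fn :: "('a::real_vector \<Rightarrow> 'a \<Rightarrow> real) \<Rightarrow> ('a \<Rightarrow> ereal) \<Rightarrow> bool" where
  "BC_fn bf f \<longleftrightarrow> proper_fn f \<and> convex_fn f \<and>
     (\<forall>b. conj_at bf f b \<ge> f b \<and> f b \<ge> ereal (qf bf b))"

definition TBC_fn :: "('a::real_vector \<Rightarrow> 'a \<Rightarrow> real) \<Rightarrow> ('a \<Rightarrow> ereal) \<Rightarrow> bool" where
  "TBC_fn bf g \<longleftrightarrow> proper_fn g \<and> convex_fn g \<and>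
     (\<forall>b. conj_at bf g (- b) \<ge> g b \<and> g b \<ge> ereal (- qf bf b))"

definition Pq :: "('a \<Rightarrow> 'a \<Rightarrow> real) \<Rightarrow> ('a \<Rightarrow> ereal) \<Rightarrow> 'a set" where
  "Pq bf f = {b. f b = ereal (qf bf b)}"

definition Nq :: "('a \<Rightarrow> 'a \<Rightarrow> real) \<Rightarrow> ('a \<Rightarrow> ereal) \<Rightarrow> 'a set" where
  "Nq bf g = {b. g b = ereal (- qf bf b)}"

end

theory Submission
  imports Defs
begin

(* Since P_q(f) and N_q(g) lie in the domains, only the forward implication is substantial. Fix c
   and put F b = f b - [b, c] + q c. On the diagonal b - y = c one has
   F b + g y = (f b - q b) + (g y + q y) >= 0, so by an Attouch--Brezis type theorem (Baire
   category and the closing step of the open mapping theorem make the sublinear gauge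
   u |-> inf {(F x + g y) / t : t > 0, x - y = t u} locally bounded, and Hahn--Banach yields a
   linear minorant of it)
   there is a continuous linear functional, by the SSDB property of the form [., z], with
   [x - y - c, z] <= F x + g y on dom f x dom g. Taking suprema, this bounds g^@(- z) by terms
   in f, and the BC and TBC inequalities then force f (z + c) = q (z + c) and g z = - q z,
   so that c = (z + c) - z. *)

section \<open>Hahn--Banach for sublinear functionals\<close>

definition sublinear :: "('a::real_vector \<Rightarrow> real) \<Rightarrow> bool" where
  "sublinear p \<longleftrightarrow> (\<forall>x y. p (x + y) \<le> p x + p y) \<and> (\<forall>t x. 0 < t \<longrightarrow> p (t *\<^sub>R x) = t * p x)"

lemma sublinear_zero: "sublinear p \<Longrightarrow> p 0 = 0"
proof -
  assume "sublinear p"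
  hence "p ((2::real) *\<^sub>R 0) = 2 * p 0" unfolding sublinear_def by (metis zero_less_numeral)
  thus "p 0 = 0" by simp
qed

lemma sublinear_nonneg_neg: "sublinear p \<Longrightarrow> 0 \<le> p x + p (- x)"
  using sublinear_zero[of p] unfolding sublinear_def by (metis add.right_inverse)

lemma sublinear_scaleR_nonneg: "sublinear p \<Longrightarrow> 0 \<le> t \<Longrightarrow> p (t *\<^sub>R x) = t * p x"
  using sublinear_zero[of p] unfolding sublinear_def by (cases "t = 0") auto

lemma cInf_image_mult_left:
  fixes S :: "real set"
  assumes "S \<noteq> {}" "bdd_below S" "0 < s"
  shows "Inf ((\<lambda>a. s * a) ` S) = s * Inf S"
proof (rule antisym)
  have bdd: "bdd_below ((\<lambda>a. s * a) ` S)"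
    using assms by (metis (no_types, lifting) bdd_below.unfold image_iff mult_left_mono less_imp_le)
  have "Inf ((\<lambda>a. s * a) ` S) / s \<le> Inf S"
  proof (rule cInf_greatest[OF assms(1)])
    fix a assume "a \<in> S"
    hence "Inf ((\<lambda>a. s * a) ` S) \<le> s * a" by (intro cInf_lower[OF _ bdd]) auto
    thus "Inf ((\<lambda>a. s * a) ` S) / s \<le> a" using assms(3) by (simp add: divide_le_eq mult.commute)
  qed
  thus "Inf ((\<lambda>a. s * a) ` S) \<le> s * Inf S" using assms(3) by (simp add: divide_le_eq mult.commute)
  show "s * Inf S \<le> Inf ((\<lambda>a. s * a) ` S)"
    using assms by (intro cInf_greatest) (auto intro!: mult_left_mono cInf_lower)
qed

lemma le_cInf_add:
  fixes S T :: "real set"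
  assumes "S \<noteq> {}" "T \<noteq> {}" "\<And>a b. a \<in> S \<Longrightarrow> b \<in> T \<Longrightarrow> v \<le> a + b"
  shows "v \<le> Inf S + Inf T"
proof -
  have "v - Inf T \<le> Inf S"
  proof (rule cInf_greatest[OF assms(1)])
    fix a assume "a \<in> S"
    hence "v - a \<le> b" if "b \<in> T" for b using assms(3) that by force
    hence "v - a \<le> Inf T" using assms(2) by (intro cInf_greatest) auto
    thus "v - Inf T \<le> a" by simp
  qed
  thus ?thesis by simp
qed

lemma sublinear_Inf_chain:
  fixes Q :: "('a::real_vector \<Rightarrow> real) set"
  assumes ne: "Q \<noteq> {}" and sub: "\<And>q. q \<in> Q \<Longrightarrow> sublinear q \<and> q \<le> p"
    and chain: "\<And>q q'. q \<in> Q \<Longrightarrow> q' \<in> Q \<Longrightarrow> q \<le> q' \<or> q' \<le> q"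
  defines "qi \<equiv> \<lambda>x. Inf ((\<lambda>q. q x) ` Q)"
  shows "sublinear qi" and "\<And>q. q \<in> Q \<Longrightarrow> qi \<le> q"
proof -
  have ne': "(\<lambda>q. q x) ` Q \<noteq> {}" for x using ne by auto
  \<comment> \<open>\<open>q x \<ge> - q (- x) \<ge> - p (- x)\<close> bounds the chain from below\<close>
  have "- p (- x) \<le> q x" if "q \<in> Q" for q x
    using that sub[OF that] sublinear_nonneg_neg[of q x] by (auto simp: le_fun_def) (smt (verit))
  hence bdd: "bdd_below ((\<lambda>q. q x) ` Q)" for x by (auto simp: bdd_below_def)
  have qi_le: "qi x \<le> q x" if "q \<in> Q" for q x
    unfolding qi_def using that bdd by (intro cInf_lower) auto
  thus "\<And>q. q \<in> Q \<Longrightarrow> qi \<le> q" by (simp add: le_fun_def)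
  show "sublinear qi"
    unfolding sublinear_def
  proof (intro conjI allI impI)
    fix x y
    show "qi (x + y) \<le> qi x + qi y"
      unfolding qi_def
    proof (rule le_cInf_add[OF ne' ne'])
      fix a b assume "a \<in> (\<lambda>q. q x) ` Q" "b \<in> (\<lambda>q. q y) ` Q"
      then obtain qa qb where qa: "qa \<in> Q" "a = qa x" and qb: "qb \<in> Q" "b = qb y" by auto
      have "qa (x + y) \<le> a + b" if "qa \<le> qb"
        using sub[OF qa(1)] that qa qb unfolding sublinear_def le_fun_def by (smt (verit))
      moreover have "qb (x + y) \<le> a + b" if "qb \<le> qa"
        using sub[OF qb(1)] that qa qb unfolding sublinear_def le_fun_def by (smt (verit))
      ultimately show "Inf ((\<lambda>q. q (x + y)) ` Q) \<le> a + b"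
        using chain[OF qa(1) qb(1)] qi_le[OF qa(1), of "x + y"] qi_le[OF qb(1), of "x + y"]
        unfolding qi_def by linarith
    qed
  next
    fix t :: real and x assume t: "0 < t"
    have "(\<lambda>q. q (t *\<^sub>R x)) ` Q = (\<lambda>a. t * a) ` ((\<lambda>q. q x) ` Q)"
      using t sub by (force simp: sublinear_def image_image)
    thus "qi (t *\<^sub>R x) = t * qi x" unfolding qi_def using cInf_image_mult_left[OF ne' bdd t] by simp
  qed
qed

definition strict_epigraph :: "('a \<Rightarrow> real) \<Rightarrow> ('a \<times> real) set" where
  "strict_epigraph q = {(x, r). q x < r}"

lemma strict_epigraph_subset_iff: "strict_epigraph q1 \<subseteq> strict_epigraph q2 \<longleftrightarrow> q2 \<le> q1"
proof
  assume sub: "strict_epigraph q1 \<subseteq> strict_epigraph q2"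
  show "q2 \<le> q1"
  proof (rule le_funI, rule ccontr)
    fix x assume "\<not> q2 x \<le> q1 x"
    hence "(x, (q1 x + q2 x) / 2) \<in> strict_epigraph q1 - strict_epigraph q2"
      by (auto simp: strict_epigraph_def)
    thus False using sub by blast
  qed
qed (auto simp: strict_epigraph_def le_fun_def intro: le_less_trans)

text \<open>Zorn's lemma is applied to strict epigraphs ordered by inclusion, which reverses the
  pointwise order of the functions.\<close>
lemma exists_minimal_sublinear_below:
  fixes p :: "'a::real_vector \<Rightarrow> real"
  assumes "sublinear p"
  shows "\<exists>q. sublinear q \<and> q \<le> p \<and> (\<forall>q'. sublinear q' \<and> q' \<le> q \<longrightarrow> q' = q)"
proof -
  define A where "A = {strict_epigraph q | q. sublinear q \<and> q \<le> p}"
  have "\<exists>M\<in>A. \<forall>X\<in>A. M \<subseteq> X \<longrightarrow> X = M"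
  proof (rule Zorn_Lemma2, intro ballI)
    fix C assume C: "C \<in> chains A"
    show "\<exists>U\<in>A. \<forall>X\<in>C. X \<subseteq> U"
    proof (cases "C = {}")
      case True thus ?thesis using assms by (auto simp: A_def)
    next
      case False
      define Q where "Q = {q. sublinear q \<and> q \<le> p \<and> strict_epigraph q \<in> C}"
      have CQ: "C = strict_epigraph ` Q" using chainsD2[OF C] by (auto simp: Q_def A_def)
      have "Q \<noteq> {}" using False CQ by auto
      moreover have "q \<le> q' \<or> q' \<le> q" if "q \<in> Q" "q' \<in> Q" for q q'
        using chainsD[OF C, of "strict_epigraph q" "strict_epigraph q'"] that
        by (auto simp: Q_def strict_epigraph_subset_iff)
      ultimately obtain qi where qi: "sublinear qi" "\<And>q. q \<in> Q \<Longrightarrow> qi \<le> q"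
        using sublinear_Inf_chain[of Q p] by (metis (mono_tags, lifting) Q_def mem_Collect_eq)
      obtain q1 where "q1 \<in> Q" using \<open>Q \<noteq> {}\<close> by auto
      hence "qi \<le> p" using qi(2) by (auto simp: Q_def intro: order_trans)
      hence "strict_epigraph qi \<in> A" using qi(1) by (auto simp: A_def)
      moreover have "\<forall>X\<in>C. X \<subseteq> strict_epigraph qi" using CQ qi(2) by (auto simp: strict_epigraph_subset_iff)
      ultimately show ?thesis by blast
    qed
  qed
  then obtain q where q: "sublinear q" "q \<le> p"
    and max: "\<forall>X\<in>A. strict_epigraph q \<subseteq> X \<longrightarrow> X = strict_epigraph q"
    by (auto simp: A_def)
  have "q' = q" if "sublinear q'" "q' \<le> q" for q'
  proof -
    have "strict_epigraph q' \<in> A" using that q by (auto simp: A_def intro: order_trans)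
    hence "strict_epigraph q' = strict_epigraph q" using max that(2) by (simp add: strict_epigraph_subset_iff)
    thus ?thesis by (metis antisym order_refl strict_epigraph_subset_iff)
  qed
  thus ?thesis using q by blast
qed

definition directional_reduction :: "('a::real_vector \<Rightarrow> real) \<Rightarrow> 'a \<Rightarrow> 'a \<Rightarrow> real" where
  "directional_reduction q y x = Inf ((\<lambda>t. q (x + t *\<^sub>R y) - t * q y) ` {0..})"

lemma directional_reduction_le:
  assumes "sublinear q" "0 \<le> t"
  shows "directional_reduction q y x \<le> q (x + t *\<^sub>R y) - t * q y"
proof -
  have "- q (- x) \<le> q (x + s *\<^sub>R y) - s * q y" if "0 \<le> s" for s
  proof -
    have "q (s *\<^sub>R y) \<le> q (x + s *\<^sub>R y) + q (- x)"
      using assms(1) unfolding sublinear_def by (metis add_diff_cancel_left' diff_conv_add_uminus)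
    thus ?thesis using sublinear_scaleR_nonneg[OF assms(1) that] by simp
  qed
  hence "bdd_below ((\<lambda>t. q (x + t *\<^sub>R y) - t * q y) ` {0..})" by (auto simp: bdd_below_def)
  thus ?thesis unfolding directional_reduction_def using assms(2) by (intro cInf_lower) auto
qed
lemma sublinear_directional_reduction:
  assumes q: "sublinear q"
  shows "sublinear (directional_reduction q y)"
proof -
  define S where "S x = (\<lambda>t. q (x + t *\<^sub>R y) - t * q y) ` {0..}" for x
  have dr: "directional_reduction q y x = Inf (S x)" for x by (simp add: directional_reduction_def S_def)
  have ne: "S x \<noteq> {}" for x by (auto simp: S_def)
  have bdd: "bdd_below (S x)" for x
    using directional_reduction_le[OF q] by (auto simp: S_def bdd_below_def) 
  have add: "q (x + y) \<le> q x + q y" for x y using q by (simp add: sublinear_def)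
  have hom: "0 < t \<Longrightarrow> q (t *\<^sub>R x) = t * q x" for t x using q by (simp add: sublinear_def)
  show ?thesis unfolding sublinear_def dr
  proof (intro conjI allI impI)
    fix x1 x2
    show "Inf (S (x1 + x2)) \<le> Inf (S x1) + Inf (S x2)"
    proof (rule le_cInf_add[OF ne ne])
      fix a b assume "a \<in> S x1" "b \<in> S x2"
      then obtain t1 t2 where t: "0 \<le> t1" "a = q (x1 + t1 *\<^sub>R y) - t1 * q y"
        "0 \<le> t2" "b = q (x2 + t2 *\<^sub>R y) - t2 * q y" by (auto simp: S_def)
      have "q (x1 + x2 + (t1 + t2) *\<^sub>R y) \<le> q (x1 + t1 *\<^sub>R y) + q (x2 + t2 *\<^sub>R y)"
        using add[of "x1 + t1 *\<^sub>R y" "x2 + t2 *\<^sub>R y"] by (simp add: algebra_simps)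
      hence "q (x1 + x2 + (t1 + t2) *\<^sub>R y) - (t1 + t2) * q y \<le> a + b" using t by (simp add: algebra_simps)
      thus "Inf (S (x1 + x2)) \<le> a + b"
        using directional_reduction_le[OF q, of "t1 + t2" y "x1 + x2"] t by (simp add: dr)
    qed
  next
    fix s :: real and x assume s: "0 < s"
    have "S (s *\<^sub>R x) = (\<lambda>a. s * a) ` S x"
    proof -
      have "q (s *\<^sub>R x + t *\<^sub>R y) - t * q y = s * (q (x + (t / s) *\<^sub>R y) - (t / s) * q y)" for t
      proof -
        have "s *\<^sub>R x + t *\<^sub>R y = s *\<^sub>R (x + (t / s) *\<^sub>R y)" using s by (simp add: algebra_simps)
        thus ?thesis using hom[OF s] s by (simp add: right_diff_distrib)
      qed
      hence "S (s *\<^sub>R x) = (\<lambda>t. s * (q (x + t *\<^sub>R y) - t * q y)) ` ((\<lambda>t. t / s) ` {0..})"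
        by (simp add: S_def image_image)
      also have "(\<lambda>t. t / s) ` {0..} = {0..}"
        using s by (auto simp: image_iff intro!: bexI[where x="_ * s"])
      finally show ?thesis by (simp add: S_def image_image)
    qed
    thus "Inf (S (s *\<^sub>R x)) = s * Inf (S x)" using cInf_image_mult_left[OF ne bdd s] by simp
  qed
qed

text \<open>A minimal sublinear functional is odd, since otherwise its reduction in some direction
  would be strictly smaller.\<close>
lemma minimal_sublinear_linear:
  fixes q :: "'a::real_vector \<Rightarrow> real"
  assumes q: "sublinear q" and min: "\<forall>q'. sublinear q' \<and> q' \<le> q \<longrightarrow> q' = q"
  shows "linear q"
proof -
  have add: "q (x + y) \<le> q x + q y" for x y using q by (simp add: sublinear_def)
  have neg: "q (- y) = - q y" for y
  proof -
    have "directional_reduction q y \<le> q"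
      using directional_reduction_le[OF q order_refl] by (simp add: le_fun_def)
    hence "directional_reduction q y = q" using min sublinear_directional_reduction[OF q] by blast
    hence "q (- y) \<le> q (- y + 1 *\<^sub>R y) - 1 * q y"
      using directional_reduction_le[OF q zero_le_one, of y "- y"] by simp
    thus ?thesis using sublinear_nonneg_neg[OF q, of y] sublinear_zero[OF q] by simp
  qed
  show "linear q"
  proof (rule linearI)
    fix x y show "q (x + y) = q x + q y"
      using add[of x y] add[of "- x" "- y"] neg[of x] neg[of y] neg[of "x + y"] by (simp add: add.commute)
  next
    fix t :: real and x show "q (t *\<^sub>R x) = t *\<^sub>R q x"
    proof (cases "0 \<le> t")
      case True thus ?thesis using sublinear_scaleR_nonneg[OF q] by simp
    next
      case False
      hence "q (t *\<^sub>R x) = - q ((- t) *\<^sub>R x)" using neg[of "(- t) *\<^sub>R x"] by simp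
      thus ?thesis using sublinear_scaleR_nonneg[OF q, of "- t"] False by simp
    qed
  qed
qed

lemma linear_below_sublinear:
  fixes p :: "'a::real_vector \<Rightarrow> real"
  assumes "sublinear p"
  shows "\<exists>l. linear l \<and> l \<le> p"
  using exists_minimal_sublinear_below[OF assms] minimal_sublinear_linear by blast

section \<open>The open mapping argument\<close>

lemma convex_geometric_sum_mem:
  fixes K :: "'v::real_vector set"
  assumes cK: "convex K" and K0: "0 \<in> K" and kK: "\<And>n. k n \<in> K"
  shows "(\<Sum>n<N. ((1/2)^(Suc n)) *\<^sub>R k n) \<in> K"
proof -
  have "\<exists>u\<in>K. (\<Sum>n<N. ((1/2)^(Suc n)) *\<^sub>R k n) = (1 - (1/2)^N) *\<^sub>R u"
  proof (induction N)
    case 0 thus ?case using K0 by auto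
  next
    case (Suc N)
    then obtain u where u: "u \<in> K" "(\<Sum>n<N. ((1/2)^(Suc n)) *\<^sub>R k n) = (1 - (1/2)^N) *\<^sub>R u" by blast
    define a :: real where "a = 1 - (1/2)^N"
    define b :: real where "b = (1/2)^(Suc N)"
    have a0: "0 \<le> a" unfolding a_def by (simp add: power_le_one)
    have b0: "0 < b" unfolding b_def by simp
    have ab: "a + b = 1 - (1/2)^(Suc N)" unfolding a_def b_def by simp
    have "(a/(a+b)) *\<^sub>R u + (b/(a+b)) *\<^sub>R k N \<in> K"
      using mem_convex_alt[OF cK u(1) kK a0 less_imp_le[OF b0]] a0 b0 by simp
    moreover have "(a+b) *\<^sub>R ((a/(a+b)) *\<^sub>R u + (b/(a+b)) *\<^sub>R k N) = a *\<^sub>R u + b *\<^sub>R k N"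
      using a0 b0 by (simp add: scaleR_add_right)
    moreover have "(\<Sum>n<Suc N. ((1/2)^(Suc n)) *\<^sub>R k n) = a *\<^sub>R u + b *\<^sub>R k N"
      unfolding sum.lessThan_Suc u(2) a_def b_def ..
    ultimately show ?case unfolding ab by metis
  qed
  then obtain u where u: "u \<in> K" "(\<Sum>n<N. ((1/2)^(Suc n)) *\<^sub>R k n) = (1 - (1/2)^N) *\<^sub>R u" by blast
  have "(1 - (1/2)^N) *\<^sub>R u + ((1/2)^N) *\<^sub>R 0 \<in> K"
    by (rule convexD[OF cK u(1) K0]) (auto simp: power_le_one)
  thus ?thesis using u(2) by simp
qed

text \<open>Iterating an approximation of error ratio \<open>1/2\<close>: each residual is doubled and approximated
  again.\<close>
lemma halving_approximation_series:
  fixes T :: "'v::real_vector \<Rightarrow> 'w::real_normed_vector"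
  assumes T: "linear T" and rho: "0 < \<rho>"
    and approx: "\<And>z. norm z < \<rho> \<Longrightarrow> \<exists>k\<in>K. norm (z - T k) < \<rho>/2"
    and y: "norm y < \<rho>/2"
  shows "\<exists>k. (\<forall>n. k n \<in> K) \<and> (\<lambda>N. T (\<Sum>n<N. ((1/2)^(Suc n)) *\<^sub>R k n)) \<longlonglongrightarrow> y"
proof -
  obtain \<sigma> where \<sigma>: "\<And>z. norm z < \<rho> \<Longrightarrow> \<sigma> z \<in> K \<and> norm (z - T (\<sigma> z)) < \<rho>/2"
    using approx by metis
  define r where "r = rec_nat (2 *\<^sub>R y) (\<lambda>n z. 2 *\<^sub>R (z - T (\<sigma> z)))"
  have r0: "r 0 = 2 *\<^sub>R y" and rS: "\<And>n. r (Suc n) = 2 *\<^sub>R (r n - T (\<sigma> (r n)))"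
    by (simp_all add: r_def)
  define k where "k n = \<sigma> (r n)" for n
  have rb: "norm (r n) < \<rho>" for n
  proof (induction n)
    case 0 thus ?case using y by (simp add: r0)
  next
    case (Suc n) thus ?case using \<sigma>[OF Suc] by (simp add: rS)
  qed
  have kK: "k n \<in> K" for n using \<sigma>[OF rb] by (simp add: k_def)
  have rep: "2 *\<^sub>R y = (\<Sum>n<N. ((1/2)^n) *\<^sub>R T (k n)) + ((1/2)^N) *\<^sub>R r N" for N
  proof (induction N)
    case 0 thus ?case by (simp add: r0)
  next
    case (Suc N)
    have "r N = T (k N) + (1/2) *\<^sub>R r (Suc N)" by (simp add: rS k_def)
    hence "((1/2)^N) *\<^sub>R r N = ((1/2)^N) *\<^sub>R T (k N) + ((1/2)^(Suc N)) *\<^sub>R r (Suc N)"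
      by (simp add: scaleR_add_right)
    thus ?case using Suc by simp
  qed
  have image_partial_sum: "T (\<Sum>n<N. ((1/2)^(Suc n)) *\<^sub>R k n) = y - ((1/2)^(Suc N)) *\<^sub>R r N" for N
  proof -
    have "T (\<Sum>n<N. ((1/2)^(Suc n)) *\<^sub>R k n) = (1/2) *\<^sub>R (\<Sum>n<N. ((1/2)^n) *\<^sub>R T (k n))"
      by (simp add: linear_sum[OF T] linear_scale[OF T] scaleR_sum_right)
    also have "\<dots> = (1/2) *\<^sub>R (2 *\<^sub>R y - ((1/2)^N) *\<^sub>R r N)" using rep[of N] by (simp add: algebra_simps)
    also have "\<dots> = y - ((1/2)^(Suc N)) *\<^sub>R r N" by (simp add: algebra_simps)
    finally show ?thesis .
  qed
  have "(\<lambda>N. ((1/2::real)^(Suc N)) *\<^sub>R r N) \<longlonglongrightarrow> 0"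
  proof (rule tendsto_norm_zero_cancel, rule Lim_null_comparison)
    show "\<forall>\<^sub>F N in sequentially. norm (norm (((1/2::real)^(Suc N)) *\<^sub>R r N)) \<le> \<rho> * (1/2)^(Suc N)"
      using rb by (auto intro!: always_eventually simp: mult.commute less_imp_le intro!: mult_left_mono)
    show "(\<lambda>N. \<rho> * (1/2::real)^(Suc N)) \<longlonglongrightarrow> 0"
      by (intro tendsto_mult_right_zero LIMSEQ_power_zero[THEN LIMSEQ_Suc]) simp
  qed
  hence "(\<lambda>N. y - ((1/2)^(Suc N)) *\<^sub>R r N) \<longlonglongrightarrow> y"
    using tendsto_diff[OF tendsto_const[of y]] by fastforce
  thus ?thesis unfolding image_partial_sum[symmetric] using kK by blast
qed

text \<open>The closing step of the open mapping theorem.\<close>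
lemma ball_subset_image_if_subset_closure:
  fixes K :: "'v::banach set" and T :: "'v \<Rightarrow> 'w::real_normed_vector"
  assumes cl: "closed K" and bd: "bounded K" and cK: "convex K" and K0: "0 \<in> K"
    and T: "bounded_linear T" and rho: "0 < \<rho>" and sub: "ball 0 \<rho> \<subseteq> closure (T ` K)"
  shows "ball 0 (\<rho>/2) \<subseteq> T ` K"
proof
  fix y :: 'w assume y: "y \<in> ball 0 (\<rho>/2)"
  have "\<exists>k\<in>K. norm (z - T k) < \<rho>/2" if "norm z < \<rho>" for z
  proof -
    have "z \<in> closure (T ` K)" using sub that by auto
    then obtain w where "w \<in> T ` K" "dist w z < \<rho>/2" using rho
      by (metis closure_approachable half_gt_zero)
    thus ?thesis by (auto simp: dist_norm norm_minus_commute)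
  qed
  then obtain k where kK: "\<And>n. k n \<in> K"
    and lim: "(\<lambda>N. T (\<Sum>n<N. ((1/2)^(Suc n)) *\<^sub>R k n)) \<longlonglongrightarrow> y"
    using halving_approximation_series[OF bounded_linear.linear[OF T] rho] y by force
  obtain R where R: "\<And>k. k \<in> K \<Longrightarrow> norm k \<le> R" using bd by (auto simp: bounded_iff)
  have "summable (\<lambda>n. ((1/2)^(Suc n)) *\<^sub>R k n)"
  proof (rule summable_comparison_test)
    show "\<exists>N. \<forall>n\<ge>N. norm (((1/2)^(Suc n)) *\<^sub>R k n) \<le> R * (1/2)^(Suc n)"
      using R[OF kK] by (auto simp: mult.commute intro!: mult_left_mono)
    show "summable (\<lambda>n. R * (1/2::real)^(Suc n))"
      by (intro summable_mult summable_ignore_initial_segment[where k=1, simplified] summable_geometric) simp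
  qed
  then obtain S where S: "(\<lambda>N. \<Sum>n<N. ((1/2)^(Suc n)) *\<^sub>R k n) \<longlonglongrightarrow> S"
    using summable_LIMSEQ by blast
  have "S \<in> K"
    by (rule closed_sequentially[OF cl _ S]) (rule convex_geometric_sum_mem[OF cK K0 kK])
  moreover have "T S = y" using LIMSEQ_unique[OF bounded_linear.tendsto[OF T S] lim] .
  ultimately show "y \<in> T ` K" by blast
qed

lemma Baire_nonempty_interior:
  fixes C :: "nat \<Rightarrow> 'a::banach set"
  assumes "\<And>n. closed (C n)" "(\<Union>n. C n) = UNIV"
  shows "\<exists>n. interior (C n) \<noteq> {}"
proof (rule ccontr)
  assume "\<not> ?thesis"
  hence "Met_TC.mtopology interior_of \<Union>(range C) = {}"
    using assms by (intro Met_TC.metric_Baire_category_alt)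
      (auto simp: complete_UNIV interior_of_def interior_def)
  thus False using assms(2) by (simp add: interior_of_def) (metis open_UNIV UNIV_I)
qed

lemma ball_subset_image_if_interior_closure:
  fixes K :: "'v::banach set" and T :: "'v \<Rightarrow> 'w::real_normed_vector"
  assumes cl: "closed K" and bd: "bounded K" and cK: "convex K" and T: "bounded_linear T"
    and int: "interior (closure (T ` K)) \<noteq> {}"
  shows "\<exists>k0\<in>K. \<exists>\<delta>>0. ball (T k0) \<delta> \<subseteq> T ` K"
proof -
  obtain w where "w \<in> interior (closure (T ` K))" using int by blast
  then obtain \<delta> where "0 < \<delta>" "ball w \<delta> \<subseteq> interior (closure (T ` K))"
    using open_contains_ball open_interior by blast
  hence d: "0 < \<delta>" "ball w \<delta> \<subseteq> closure (T ` K)" using interior_subset by blast+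
  hence "w \<in> closure (T ` K)" using centre_in_ball by blast
  hence ap: "\<forall>e>0. \<exists>z\<in>T ` K. dist z w < e" by (simp only: closure_approachable)
  have "\<delta>/2 > 0" using d(1) by simp
  with ap obtain k0 where k0: "k0 \<in> K" "dist (T k0) w < \<delta>/2" by blast
  define K' where "K' = (+) (- k0) ` K"
  have lin: "T (- k0 + k) = - T k0 + T k" for k
    using linear_add[OF bounded_linear.linear[OF T]] linear_neg[OF bounded_linear.linear[OF T]] by metis
  have TK': "T ` K' = (+) (- T k0) ` (T ` K)"
    unfolding K'_def image_image lin ..
  have "ball 0 (\<delta>/2) \<subseteq> closure (T ` K')"
  proof
    fix u :: 'w assume "u \<in> ball 0 (\<delta>/2)"
    moreover have "dist (T k0) (u + T k0) = norm u" by (simp add: dist_norm)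
    ultimately have "dist w (u + T k0) < \<delta>"
      using k0(2) dist_triangle[of w "u + T k0" "T k0"] by (simp add: dist_commute)
    hence "u + T k0 \<in> closure (T ` K)" using d(2) by auto
    hence "- T k0 + (u + T k0) \<in> (+) (- T k0) ` closure (T ` K)" by blast
    thus "u \<in> closure (T ` K')" unfolding TK' closure_translation by simp
  qed
  moreover have "0 \<in> K'" unfolding K'_def using k0(1) by (intro image_eqI[where x=k0]) simp_all
  ultimately have sub: "ball 0 ((\<delta>/2)/2) \<subseteq> T ` K'"
    using d(1) unfolding K'_def
    by (intro ball_subset_image_if_subset_closure closed_translation bounded_translation
        convex_translation cl bd cK T) simp_all
  have "ball (T k0) (\<delta>/4) \<subseteq> T ` K"
  proof
    fix u assume "u \<in> ball (T k0) (\<delta>/4)"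
    hence "u - T k0 \<in> ball 0 ((\<delta>/2)/2)" by (simp add: dist_norm norm_minus_commute)
    hence "u - T k0 \<in> T ` K'" using sub by blast
    then obtain k where "k \<in> K" "u - T k0 = T (- k0 + k)" by (auto simp: K'_def)
    thus "u \<in> T ` K" using lin[of k] by (simp add: algebra_simps)
  qed
  thus ?thesis using k0(1) d(1) by (intro bexI[OF _ k0(1)] exI[of _ "\<delta>/4"]) simp
qed

section \<open>The Attouch--Brezis separation\<close>

lemma convex_on_combination:
  assumes "convex_on D F" "x \<in> D" "y \<in> D" "0 \<le> t" "t \<le> 1"
  shows "t *\<^sub>R x + (1 - t) *\<^sub>R y \<in> D \<and> F (t *\<^sub>R x + (1 - t) *\<^sub>R y) \<le> t * F x + (1 - t) * F y"
  using assms convexD[of D x y t "1 - t"] unfolding convex_on_def by auto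

lemma convex_on_sublevel: "convex_on D F \<Longrightarrow> convex {x\<in>D. F x \<le> r}"
proof (rule convexI)
  fix x y and u v :: real
  assume F: "convex_on D F" and x: "x \<in> {x\<in>D. F x \<le> r}" and y: "y \<in> {x\<in>D. F x \<le> r}"
    and uv: "0 \<le> u" "0 \<le> v" "u + v = 1"
  hence v: "v = 1 - u" "u \<le> 1" by auto
  note comb = convex_on_combination[OF F _ _ uv(1) v(2), of x y]
  have "u * F x + (1 - u) * F y \<le> u * r + (1 - u) * r"
    using x y v uv by (intro add_mono mult_left_mono) auto
  also have "\<dots> = r" by (simp add: algebra_simps)
  finally have "u * F x + (1 - u) * F y \<le> r" .
  hence "u *\<^sub>R x + (1 - u) *\<^sub>R y \<in> {x\<in>D. F x \<le> r}" using comb x y by auto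
  thus "u *\<^sub>R x + v *\<^sub>R y \<in> {x\<in>D. F x \<le> r}" using v(1) by simp
qed

lemma convex_on_translation:
  assumes "convex_on D F"
  shows "convex_on ((+) a ` D) (\<lambda>x. F (x - a))"
  unfolding convex_on_def
proof (intro conjI ballI allI impI)
  show "convex ((+) a ` D)" using assms convex_on_imp_convex convex_translation by blast
  fix x y and u v :: real assume "x \<in> (+) a ` D" "y \<in> (+) a ` D" "0 \<le> u" "0 \<le> v" "u + v = 1"
  moreover have "u *\<^sub>R x + v *\<^sub>R y - a = u *\<^sub>R (x - a) + v *\<^sub>R (y - a)" if "u + v = 1"
    using that by (simp add: algebra_simps flip: scaleR_add_left)
  ultimately show "F (u *\<^sub>R x + v *\<^sub>R y - a) \<le> u * F (x - a) + v * F (y - a)"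
    using assms unfolding convex_on_def by auto
qed

lemma convex_on_const_minus_linear:
  assumes "linear l" "convex S"
  shows "convex_on S (\<lambda>x. a - l x)"
proof (rule convex_onI[OF _ assms(2)])
  fix t :: real and x y
  show "a - l ((1 - t) *\<^sub>R x + t *\<^sub>R y) \<le> (1 - t) * (a - l x) + t * (a - l y)"
    by (simp add: linear_add[OF assms(1)] linear_diff[OF assms(1)] linear_scale[OF assms(1)] algebra_simps)
qed

locale convex_diff_pair =
  fixes DF DG :: "'a::banach set" and F G :: "'a \<Rightarrow> real"
  assumes convex_F: "convex_on DF F" and convex_G: "convex_on DG G"
    and closed_F: "\<And>r. closed {x\<in>DF. F x \<le> r}" and closed_G: "\<And>r. closed {x\<in>DG. G x \<le> r}"
    and diff_surj: "\<And>u. \<exists>x\<in>DF. \<exists>y\<in>DG. u = x - y"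
begin

text \<open>Baire's theorem applied to the closures of the images of the bounded parts of the
  sublevel sets under \<open>(x, y) \<mapsto> x - y\<close>.\<close>
lemma ball_bounded_diff_rep:
  "\<exists>c0 r M. 0 < r \<and> (\<forall>u. norm (u - c0) < r \<longrightarrow> (\<exists>x\<in>DF. \<exists>y\<in>DG. u = x - y \<and> F x + G y \<le> M))"
proof -
  define T :: "'a \<times> 'a \<Rightarrow> 'a" where "T = (\<lambda>k. fst k - snd k)"
  have T: "bounded_linear T" unfolding T_def by (intro bounded_linear_sub bounded_linear_fst bounded_linear_snd)
  define K where "K n = ({x\<in>DF. F x \<le> real n} \<inter> cball 0 (real n)) \<times> ({y\<in>DG. G y \<le> real n} \<inter> cball 0 (real n))" for n
  have cover: "(\<Union>n. closure (T ` K n)) = UNIV"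
  proof (rule set_eqI, rule iffI)
    fix c :: 'a
    obtain x y where xy: "x \<in> DF" "y \<in> DG" "c = x - y" using diff_surj by blast
    obtain n :: nat where "max (max (norm x) (norm y)) (max (F x) (G y)) \<le> real n" using real_arch_simple by blast
    hence "(x, y) \<in> K n" using xy by (simp add: K_def)
    hence "c \<in> T ` K n" using xy by (simp add: T_def rev_image_eqI)
    hence "c \<in> closure (T ` K n)" by (rule subsetD[OF closure_subset])
    thus "c \<in> (\<Union>n. closure (T ` K n))" by (rule UN_I[OF UNIV_I])
  qed auto
  obtain n where int: "interior (closure (T ` K n)) \<noteq> {}"
    using Baire_nonempty_interior[of "\<lambda>n. closure (T ` K n)", OF closed_closure cover] by blast
  have "closed (K n)" unfolding K_def by (intro closed_Times closed_Int closed_F closed_G closed_cball)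
  moreover have "bounded (K n)" unfolding K_def by (intro bounded_Times bounded_Int) auto
  moreover have "convex (K n)" unfolding K_def
    by (intro convex_Times convex_Int convex_on_sublevel[OF convex_F] convex_on_sublevel[OF convex_G] convex_cball)
  ultimately have "\<exists>k0\<in>K n. \<exists>\<delta>>0. ball (T k0) \<delta> \<subseteq> T ` K n"
    by (rule ball_subset_image_if_interior_closure[OF _ _ _ T int])
  then obtain k0 \<delta> where "0 < \<delta>" and ball: "ball (T k0) \<delta> \<subseteq> T ` K n" by blast
  have rep: "\<exists>x\<in>DF. \<exists>y\<in>DG. u = x - y \<and> F x + G y \<le> 2 * real n" if "norm (u - T k0) < \<delta>" for u
  proof -
    have "u \<in> ball (T k0) \<delta>" using that by (simp add: dist_norm norm_minus_commute)
    then obtain x y where xy: "(x, y) \<in> K n" "u = x - y" using ball by (auto simp: T_def)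
    hence "x \<in> DF" "y \<in> DG" "F x + G y \<le> 2 * real n" by (auto simp: K_def)
    thus ?thesis using xy(2) by blast
  qed
  show ?thesis
    using rep \<open>0 < \<delta>\<close> by (intro exI[of _ "T k0"] exI[of _ \<delta>] exI[of _ "2 * real n"]) simp
qed

lemma ball0_bounded_diff_rep:
  "\<exists>r M. 0 < r \<and> (\<forall>u. norm u < r \<longrightarrow> (\<exists>x\<in>DF. \<exists>y\<in>DG. u = x - y \<and> F x + G y \<le> M))"
proof -
  obtain c0 r M where r: "0 < r"
    and rep: "\<And>u. norm (u - c0) < r \<Longrightarrow> \<exists>x\<in>DF. \<exists>y\<in>DG. u = x - y \<and> F x + G y \<le> M"
    using ball_bounded_diff_rep by blast
  obtain x1 y1 where xy1: "x1 \<in> DF" "y1 \<in> DG" "- c0 = x1 - y1" using diff_surj by blast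
  \<comment> \<open>the midpoint of a representation of \<open>2 u + c0\<close> and one of \<open>- c0\<close> represents \<open>u\<close>\<close>
  have "\<exists>x\<in>DF. \<exists>y\<in>DG. u = x - y \<and> F x + G y \<le> (M + F x1 + G y1) / 2" if u: "norm u < r / 2" for u
  proof -
    have "norm ((2 *\<^sub>R u + c0) - c0) < r" using u by simp
    then obtain x y where xy: "x \<in> DF" "y \<in> DG" "2 *\<^sub>R u + c0 = x - y" "F x + G y \<le> M"
      using rep by blast
    have h: "0 \<le> (1/2::real)" "(1/2::real) \<le> 1" by simp_all
    note fx = convex_on_combination[OF convex_F xy(1) xy1(1) h]
      and gy = convex_on_combination[OF convex_G xy(2) xy1(2) h]
    let ?x = "(1/2::real) *\<^sub>R x + (1 - 1/2) *\<^sub>R x1" and ?y = "(1/2::real) *\<^sub>R y + (1 - 1/2) *\<^sub>R y1"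
    have "?x - ?y = (1/2::real) *\<^sub>R (x - y) + (1/2::real) *\<^sub>R (x1 - y1)" by (simp add: algebra_simps)
    also have "\<dots> = u" unfolding xy(3)[symmetric] xy1(3)[symmetric] by (simp add: algebra_simps)
    finally show ?thesis using fx gy xy(4) by (intro bexI[of _ ?x] bexI[of _ ?y]) auto
  qed
  thus ?thesis using r by (intro exI[of _ "r / 2"] exI[of _ "(M + F x1 + G y1) / 2"]) auto
qed

definition gauge_values :: "'a \<Rightarrow> real set" where
  "gauge_values c = {(F x + G y) / t | x y t. x \<in> DF \<and> y \<in> DG \<and> 0 < t \<and> x - y = t *\<^sub>R c}"

definition diff_gauge :: "'a \<Rightarrow> real" where
  "diff_gauge c = Inf (gauge_values c)"

lemma gauge_valuesI:
  "x \<in> DF \<Longrightarrow> y \<in> DG \<Longrightarrow> 0 < t \<Longrightarrow> x - y = t *\<^sub>R c \<Longrightarrow> (F x + G y) / t \<in> gauge_values c"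
  unfolding gauge_values_def by blast

lemma gauge_values_scaleR:
  assumes a: "0 < a"
  shows "gauge_values (a *\<^sub>R c) = (\<lambda>v. a * v) ` gauge_values c"
proof (intro set_eqI iffI)
  fix v assume "v \<in> gauge_values (a *\<^sub>R c)"
  then obtain x y t where h: "v = (F x + G y) / t" "x \<in> DF" "y \<in> DG" "0 < t" "x - y = t *\<^sub>R (a *\<^sub>R c)"
    unfolding gauge_values_def by blast
  have "(F x + G y) / (t * a) \<in> gauge_values c" using h a by (intro gauge_valuesI) simp_all
  moreover have "v = a * ((F x + G y) / (t * a))" using h a by simp
  ultimately show "v \<in> (\<lambda>v. a * v) ` gauge_values c" by blast
next
  fix v assume "v \<in> (\<lambda>v. a * v) ` gauge_values c"
  then obtain x y t where h: "v = a * ((F x + G y) / t)" "x \<in> DF" "y \<in> DG" "0 < t" "x - y = t *\<^sub>R c"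
    unfolding gauge_values_def by blast
  have "(F x + G y) / (t / a) \<in> gauge_values (a *\<^sub>R c)" using h a by (intro gauge_valuesI) simp_all
  thus "v \<in> gauge_values (a *\<^sub>R c)" using h a by (simp add: ac_simps)
qed

lemma gauge_values_add:
  assumes "v1 \<in> gauge_values c1" "v2 \<in> gauge_values c2"
  shows "\<exists>v\<in>gauge_values (c1 + c2). v \<le> v1 + v2"
proof -
  obtain x1 y1 t1 x2 y2 t2 where
    a1: "v1 = (F x1 + G y1) / t1" "x1 \<in> DF" "y1 \<in> DG" "0 < t1" "x1 - y1 = t1 *\<^sub>R c1" and
    a2: "v2 = (F x2 + G y2) / t2" "x2 \<in> DF" "y2 \<in> DG" "0 < t2" "x2 - y2 = t2 *\<^sub>R c2"
    using assms unfolding gauge_values_def by blast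
  \<comment> \<open>combine both representations with weights proportional to \<open>1 / t1\<close> and \<open>1 / t2\<close>\<close>
  define lam where "lam = t2 / (t1 + t2)"
  define t where "t = t1 * t2 / (t1 + t2)"
  have l01: "0 \<le> lam" "lam \<le> 1" using a1(4) a2(4) by (auto simp: lam_def)
  have tpos: "0 < t" using a1(4) a2(4) by (simp add: t_def)
  have e1: "lam * t1 = t" and e2: "(1 - lam) * t2 = t"
    using a1(4) a2(4) by (simp_all add: lam_def t_def field_simps)
  note fz = convex_on_combination[OF convex_F a1(2) a2(2) l01]
    and gz = convex_on_combination[OF convex_G a1(3) a2(3) l01]
  define x where "x = lam *\<^sub>R x1 + (1 - lam) *\<^sub>R x2"
  define y where "y = lam *\<^sub>R y1 + (1 - lam) *\<^sub>R y2"
  have "x - y = lam *\<^sub>R (x1 - y1) + (1 - lam) *\<^sub>R (x2 - y2)"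
    by (simp add: x_def y_def algebra_simps)
  also have "\<dots> = t *\<^sub>R (c1 + c2)" unfolding a1(5) a2(5) by (simp add: e1 e2 scaleR_add_right)
  finally have mem: "(F x + G y) / t \<in> gauge_values (c1 + c2)"
    using fz gz tpos by (intro gauge_valuesI) (simp_all add: x_def y_def)
  have w1: "lam / t = 1 / t1" and w2: "(1 - lam) / t = 1 / t2"
    using e1 e2 tpos a1(4) a2(4) by (auto simp: field_simps)
  have "F x + G y \<le> lam * (F x1 + G y1) + (1 - lam) * (F x2 + G y2)"
    using add_mono[OF conjunct2[OF fz] conjunct2[OF gz]] unfolding x_def y_def by (simp add: algebra_simps)
  hence "(F x + G y) / t \<le> (lam * (F x1 + G y1) + (1 - lam) * (F x2 + G y2)) / t"
    using tpos by (simp add: divide_right_mono)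
  also have "\<dots> = (lam / t) * (F x1 + G y1) + ((1 - lam) / t) * (F x2 + G y2)"
    by (simp add: add_divide_distrib)
  also have "\<dots> = v1 + v2" using a1(1) a2(1) by (simp add: w1 w2)
  finally show ?thesis using mem by auto
qed

text \<open>A representation of \<open>- s c\<close> bounds the gauge values at \<open>c\<close> from below, because a convex
  combination of it with a representation of a positive multiple of \<open>c\<close> lies on the diagonal.\<close>
lemma gauge_values_lower_bound:
  assumes diag: "\<And>x. x \<in> DF \<Longrightarrow> x \<in> DG \<Longrightarrow> 0 \<le> F x + G x"
    and x': "x' \<in> DF" and y': "y' \<in> DG" and s: "0 < s" and xy': "x' - y' = - (s *\<^sub>R c)"
    and a: "a \<in> gauge_values c"
  shows "- (F x' + G y') / s \<le> a"
proof -
  obtain x y t where xyt: "a = (F x + G y) / t" "x \<in> DF" "y \<in> DG" "0 < t" "x - y = t *\<^sub>R c"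
    using a unfolding gauge_values_def by blast
  define lam where "lam = s / (s + t)"
  have l01: "0 \<le> lam" "lam \<le> 1" using s xyt(4) by (auto simp: lam_def)
  note fz = convex_on_combination[OF convex_F xyt(2) x' l01]
    and gz = convex_on_combination[OF convex_G xyt(3) y' l01]
  define z where "z = lam *\<^sub>R x + (1 - lam) *\<^sub>R x'"
  have "z - (lam *\<^sub>R y + (1 - lam) *\<^sub>R y') = lam *\<^sub>R (x - y) + (1 - lam) *\<^sub>R (x' - y')"
    unfolding z_def by (simp add: algebra_simps)
  also have "\<dots> = (lam * t - (1 - lam) * s) *\<^sub>R c"
    unfolding xyt(5) xy' by (simp add: algebra_simps)
  also have "lam * t - (1 - lam) * s = 0" using s xyt(4) by (simp add: lam_def field_simps)
  finally have z: "z = lam *\<^sub>R y + (1 - lam) *\<^sub>R y'" by simp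
  have zF: "z \<in> DF" "F z \<le> lam * F x + (1 - lam) * F x'" using fz by (simp_all add: z_def)
  have zG: "z \<in> DG" "G z \<le> lam * G y + (1 - lam) * G y'" using gz z by simp_all
  have "0 \<le> F z + G z" using diag zF zG by simp
  also have "\<dots> \<le> lam * (F x + G y) + (1 - lam) * (F x' + G y')"
    using add_mono[OF zF(2) zG(2)] by (simp add: algebra_simps)
  also have "\<dots> = (s * (F x + G y) + t * (F x' + G y')) / (s + t)"
  proof -
    have "1 - lam = t / (s + t)" using s xyt(4) by (simp add: lam_def field_simps)
    thus ?thesis by (simp add: lam_def add_divide_distrib)
  qed
  finally have "0 \<le> s * (F x + G y) + t * (F x' + G y')"
    using s xyt(4) by (simp add: zero_le_divide_iff)
  moreover have "F x + G y = t * a" using xyt(1,4) by simp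
  ultimately have "0 \<le> t * (s * a + (F x' + G y'))" by (simp add: algebra_simps)
  hence "0 \<le> s * a + (F x' + G y')" using xyt(4) by (simp add: zero_le_mult_iff)
  thus ?thesis using s by (simp add: field_simps)
qed

lemma diff_gauge_le:
  assumes "bdd_below (gauge_values (x - y))" "x \<in> DF" "y \<in> DG"
  shows "diff_gauge (x - y) \<le> F x + G y"
  using cInf_lower[OF gauge_valuesI[OF assms(2,3) zero_less_one, of "x - y"] assms(1)]
  by (simp add: diff_gauge_def)

lemma sublinear_diff_gauge:
  assumes ne: "\<And>c. gauge_values c \<noteq> {}" and bdd: "\<And>c. bdd_below (gauge_values c)"
  shows "sublinear diff_gauge"
  unfolding sublinear_def
proof (intro conjI allI impI)
  fix c1 c2
  show "diff_gauge (c1 + c2) \<le> diff_gauge c1 + diff_gauge c2" unfolding diff_gauge_def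
  proof (rule le_cInf_add[OF ne ne])
    fix v1 v2 assume "v1 \<in> gauge_values c1" "v2 \<in> gauge_values c2"
    then obtain v where "v \<in> gauge_values (c1 + c2)" "v \<le> v1 + v2" using gauge_values_add by blast
    thus "Inf (gauge_values (c1 + c2)) \<le> v1 + v2" using cInf_lower[OF _ bdd] by (meson order_trans)
  qed
next
  fix a :: real and c assume "0 < a"
  thus "diff_gauge (a *\<^sub>R c) = a * diff_gauge c"
    unfolding diff_gauge_def gauge_values_scaleR[OF \<open>0 < a\<close>] by (rule cInf_image_mult_left[OF ne bdd])
qed

lemma gauge_values_bounds:
  assumes diag: "\<And>x. x \<in> DF \<Longrightarrow> x \<in> DG \<Longrightarrow> 0 \<le> F x + G x"
  obtains K where "\<And>c. gauge_values c \<noteq> {}" and "\<And>c. bdd_below (gauge_values c)"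
    and "\<And>c. c \<noteq> 0 \<Longrightarrow> \<exists>a\<in>gauge_values c. a \<le> K * norm c"
proof -
  obtain r M where r: "0 < r"
    and rep: "\<And>u. norm u < r \<Longrightarrow> \<exists>x\<in>DF. \<exists>y\<in>DG. u = x - y \<and> F x + G y \<le> M"
    using ball0_bounded_diff_rep by blast
  have small: "\<exists>a\<in>gauge_values c. a \<le> M / t" if t: "0 < t" "norm (t *\<^sub>R c) < r" for c t
  proof -
    obtain x y where xy: "x \<in> DF" "y \<in> DG" "t *\<^sub>R c = x - y" "F x + G y \<le> M" using rep[OF t(2)] by blast
    moreover have "(F x + G y) / t \<le> M / t" using xy(4) t(1) by (simp add: divide_right_mono)
    ultimately show ?thesis using gauge_valuesI[OF xy(1,2) t(1) xy(3)[symmetric]] by blast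
  qed
  have "gauge_values c \<noteq> {} \<and> bdd_below (gauge_values c)" for c
  proof -
    define s where "s = r / (2 * (norm c + 1))"
    have d: "norm c < 2 * (norm c + 1)" "0 < 2 * (norm c + 1)" by (simp_all add: add_nonneg_pos)
    hence "0 < s" unfolding s_def using r by simp
    moreover have "norm (s *\<^sub>R c) < r"
    proof -
      have "norm c / (2 * (norm c + 1)) < 1" using d by simp
      hence "r * (norm c / (2 * (norm c + 1))) < r * 1" using r by (rule mult_strict_left_mono)
      thus ?thesis using \<open>0 < s\<close> r by (simp add: s_def)
    qed
    ultimately have s: "0 < s" "norm (s *\<^sub>R c) < r" by blast+
    obtain x' y' where "x' \<in> DF" "y' \<in> DG" "- (s *\<^sub>R c) = x' - y'"
      using rep[of "- (s *\<^sub>R c)"] s(2) by auto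
    hence "bdd_below (gauge_values c)"
      using gauge_values_lower_bound[OF diag _ _ s(1)] unfolding bdd_below_def by metis
    thus ?thesis using small[OF s] by auto
  qed
  moreover have "\<exists>a\<in>gauge_values c. a \<le> (2 * M / r) * norm c" if "c \<noteq> 0" for c
    using small[of "r / (2 * norm c)" c] that r by (simp add: field_simps)
  ultimately show thesis using that[of "2 * M / r"] by simp
qed

text \<open>Hahn--Banach applied to the gauge, which the Baire argument makes finite and locally bounded.\<close>
theorem attouch_brezis_separation:
  assumes diag: "\<And>x. x \<in> DF \<Longrightarrow> x \<in> DG \<Longrightarrow> 0 \<le> F x + G x"
  shows "\<exists>l. bounded_linear l \<and> (\<forall>x\<in>DF. \<forall>y\<in>DG. l (x - y) \<le> F x + G y)"
proof -
  obtain K where ne: "\<And>c. gauge_values c \<noteq> {}" and bdd: "\<And>c. bdd_below (gauge_values c)"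
    and up: "\<And>c. c \<noteq> 0 \<Longrightarrow> \<exists>a\<in>gauge_values c. a \<le> K * norm c"
    using gauge_values_bounds[OF diag] by metis
  obtain l where l: "linear l" "l \<le> diff_gauge"
    using linear_below_sublinear[OF sublinear_diff_gauge[OF ne bdd]] by blast
  have bnd: "l c \<le> K * norm c" for c
  proof (cases "c = 0")
    case False
    then obtain a where a: "a \<in> gauge_values c" "a \<le> K * norm c" using up by blast
    have "l c \<le> diff_gauge c" using l(2) by (simp add: le_fun_def)
    also have "\<dots> \<le> a" unfolding diff_gauge_def by (rule cInf_lower[OF a(1) bdd])
    finally show ?thesis using a(2) by simp
  qed (simp add: linear_0[OF l(1)])
  have "bounded_linear l"
  proof (rule bounded_linear_intro[where K=K])
    show "l (x + y) = l x + l y" for x y by (rule linear_add[OF l(1)])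
    show "l (a *\<^sub>R x) = a *\<^sub>R l x" for a x by (rule linear_scale[OF l(1)])
    show "norm (l x) \<le> norm x * K" for x
      using bnd[of x] bnd[of "- x"] linear_neg[OF l(1), of x] by (simp add: abs_le_iff mult.commute)
  qed
  moreover have "l (x - y) \<le> F x + G y" if "x \<in> DF" "y \<in> DG" for x y
  proof -
    have "l (x - y) \<le> diff_gauge (x - y)" using l(2) by (simp add: le_fun_def)
    also have "\<dots> \<le> F x + G y" by (rule diff_gauge_le[OF bdd that])
    finally show ?thesis .
  qed
  ultimately show ?thesis by auto
qed

corollary attouch_brezis_separation_at:
  fixes c :: 'a
  assumes diag: "\<And>x y. x \<in> DF \<Longrightarrow> y \<in> DG \<Longrightarrow> x - y = c \<Longrightarrow> 0 \<le> F x + G y"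
  shows "\<exists>l. bounded_linear l \<and> (\<forall>x\<in>DF. \<forall>y\<in>DG. l (x - y - c) \<le> F x + G y)"
proof -
  interpret shifted: convex_diff_pair "(+) (- c) ` DF" DG "\<lambda>x. F (x + c)" G
  proof
    show "convex_on ((+) (- c) ` DF) (\<lambda>x. F (x + c))"
      using convex_on_translation[OF convex_F, of "- c"] by simp
    have eq: "{x \<in> (+) (- c) ` DF. F (x + c) \<le> r} = (+) (- c) ` {x\<in>DF. F x \<le> r}" for r
      by (auto simp: image_iff)
    show "closed {x \<in> (+) (- c) ` DF. F (x + c) \<le> r}" for r
      unfolding eq by (rule closed_translation[OF closed_F])
    show "\<exists>x\<in>(+) (- c) ` DF. \<exists>y\<in>DG. u = x - y" for u
    proof -
      obtain x y where "x \<in> DF" "y \<in> DG" "u + c = x - y" using diff_surj by blast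
      thus ?thesis by (intro bexI[of _ "- c + x"] bexI[of _ y] imageI) (auto simp: algebra_simps)
    qed
  qed (fact convex_G closed_G)+
  have "0 \<le> F (x + c) + G x" if "x \<in> (+) (- c) ` DF" "x \<in> DG" for x
    using that diag[of "x + c" x] by auto
  then obtain l where "bounded_linear l"
    and l: "\<And>x y. x \<in> (+) (- c) ` DF \<Longrightarrow> y \<in> DG \<Longrightarrow> l (x - y) \<le> F (x + c) + G y"
    using shifted.attouch_brezis_separation by blast
  moreover have "l (x - y - c) \<le> F x + G y" if "x \<in> DF" "y \<in> DG" for x y
    using l[of "- c + x" y] that by (simp add: algebra_simps)
  ultimately show ?thesis by auto
qed

end

section \<open>Extended real valued functions\<close>

lemma dom_fn_real: "x \<in> dom_fn f \<Longrightarrow> f x = ereal (real_of_ereal (f x))"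
  by (auto simp: dom_fn_def)

lemma not_dom_fn_infinity: "proper_fn f \<Longrightarrow> x \<notin> dom_fn f \<Longrightarrow> f x = \<infinity>"
  by (cases "f x") (auto simp: dom_fn_def proper_fn_def)

lemma convex_on_dom_fn:
  assumes "proper_fn f" "convex_fn f"
  shows "convex_on (dom_fn f) (\<lambda>x. real_of_ereal (f x))"
proof -
  have "(1 - t) *\<^sub>R a + t *\<^sub>R b \<in> dom_fn f \<and>
    real_of_ereal (f ((1 - t) *\<^sub>R a + t *\<^sub>R b)) \<le> (1 - t) * real_of_ereal (f a) + t * real_of_ereal (f b)"
    if a: "a \<in> dom_fn f" and b: "b \<in> dom_fn f" and t: "0 < t" "t < 1" for a b t
  proof -
    obtain A B where AB: "f a = ereal A" "f b = ereal B" using a b by (auto simp: dom_fn_def)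
    have "f ((1 - t) *\<^sub>R a + (1 - (1 - t)) *\<^sub>R b) \<le> ereal (1 - t) * f a + ereal (1 - (1 - t)) * f b"
    proof -
      have "0 < 1 - t \<and> 1 - t < 1 \<longrightarrow> f ((1 - t) *\<^sub>R a + (1 - (1 - t)) *\<^sub>R b)
          \<le> ereal (1 - t) * f a + ereal (1 - (1 - t)) * f b"
        using assms(2) unfolding convex_fn_def by blast
      thus ?thesis using t by simp
    qed
    hence le: "f ((1 - t) *\<^sub>R a + t *\<^sub>R b) \<le> ereal ((1 - t) * A + t * B)"
      using AB by simp
    moreover have "f ((1 - t) *\<^sub>R a + t *\<^sub>R b) \<noteq> - \<infinity>" using assms(1) by (simp add: proper_fn_def)
    ultimately show ?thesis using AB by (cases "f ((1 - t) *\<^sub>R a + t *\<^sub>R b)") (auto simp: dom_fn_def)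
  qed
  moreover have "convex (dom_fn f)"
    unfolding convex_alt
  proof (intro ballI allI impI)
    fix a b and t :: real assume "a \<in> dom_fn f" "b \<in> dom_fn f" "0 \<le> t \<and> t \<le> 1"
    thus "(1 - t) *\<^sub>R a + t *\<^sub>R b \<in> dom_fn f"
      using calculation by (cases "t = 0 \<or> t = 1") auto
  qed
  ultimately show ?thesis by (intro convex_onI) auto
qed

lemma lsc_fn_closed_le:
  fixes f :: "'a::topological_space \<Rightarrow> ereal" and h :: "'a \<Rightarrow> real"
  assumes lsc: "lsc_fn f" and h: "continuous_on UNIV h"
  shows "closed {x. f x \<le> ereal (h x)}"
proof -
  have "open {x. ereal (h x) < f x}"
  proof (subst open_subopen, intro ballI)
    fix x0 assume "x0 \<in> {x. ereal (h x) < f x}"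
    then obtain z where z: "ereal (h x0) < ereal z" "ereal z < f x0" using ereal_dense2 by blast
    define U where "U = - {x. f x \<le> ereal z} \<inter> {x. h x < z}"
    have "open U" unfolding U_def
      using lsc h by (intro open_Int open_Collect_less) (auto simp: lsc_fn_def continuous_on_const)
    moreover have "x0 \<in> U" using z by (auto simp: U_def)
    moreover have "U \<subseteq> {x. ereal (h x) < f x}"
    proof
      fix x assume "x \<in> U"
      hence "ereal (h x) < ereal z" "ereal z < f x" by (auto simp: U_def)
      thus "x \<in> {x. ereal (h x) < f x}" using less_trans by blast
    qed
    ultimately show "\<exists>U. open U \<and> x0 \<in> U \<and> U \<subseteq> {x. ereal (h x) < f x}" by blast
  qed
  moreover have "{x. f x \<le> ereal (h x)} = - {x. ereal (h x) < f x}" by (auto simp: not_less)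
  ultimately show ?thesis by (simp add: closed_def)
qed

lemma closed_sublevel_dom_fn:
  fixes f :: "'a::topological_space \<Rightarrow> ereal"
  assumes "proper_fn f" "lsc_fn f" "continuous_on UNIV h"
  shows "closed {x \<in> dom_fn f. real_of_ereal (f x) + h x \<le> r}"
proof -
  have "{x \<in> dom_fn f. real_of_ereal (f x) + h x \<le> r} = {x. f x \<le> ereal (r - h x)}"
  proof (rule set_eqI)
    fix x show "x \<in> {x \<in> dom_fn f. real_of_ereal (f x) + h x \<le> r} \<longleftrightarrow> x \<in> {x. f x \<le> ereal (r - h x)}"
      using assms(1) unfolding dom_fn_def proper_fn_def by (cases "f x") auto
  qed
  thus ?thesis using lsc_fn_closed_le[OF assms(2)] assms(3) by (simp add: continuous_intros)
qed

lemma conj_at_le: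
  assumes "proper_fn f" "\<And>b. b \<in> dom_fn f \<Longrightarrow> bf b c - real_of_ereal (f b) \<le> r"
  shows "conj_at bf f c \<le> ereal r"
  unfolding conj_at_def
proof (rule SUP_least)
  fix b show "ereal (bf b c) - f b \<le> ereal r"
  proof (cases "b \<in> dom_fn f")
    case True thus ?thesis using assms(2)[OF True] by (subst dom_fn_real[OF True]) simp
  next
    case False thus ?thesis using not_dom_fn_infinity[OF assms(1)] by simp
  qed
qed

text \<open>From a bound on \<open>g\<^sup>@(- z)\<close> in terms of \<open>f\<close>, the BC and TBC inequalities force
  \<open>f\<^sup>@(w) \<le> q(w)\<close>, hence \<open>f w = q w\<close>, and then, evaluating the bound at \<open>b = w\<close>, \<open>g z = - q z\<close>.\<close>
lemma Pq_Nq_if_conj_bound: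
  assumes f: "BC_fn bf f" and g: "TBC_fn bf g"
    and bound: "\<And>b y. b \<in> dom_fn f \<Longrightarrow> y \<in> dom_fn g \<Longrightarrow>
      bf y (- z) - real_of_ereal (g y) \<le> real_of_ereal (f b) - bf b w + qf bf w - qf bf z"
  shows "w \<in> Pq bf f" and "z \<in> Nq bf g"
proof -
  have pf: "proper_fn f" and f_conj: "\<And>b. f b \<le> conj_at bf f b" and f_q: "\<And>b. ereal (qf bf b) \<le> f b"
    using f by (auto simp: BC_fn_def)
  have pg: "proper_fn g" and g_conj: "\<And>b. g b \<le> conj_at bf g (- b)" and g_q: "\<And>b. ereal (- qf bf b) \<le> g b"
    using g by (auto simp: TBC_fn_def)
  have gz: "g z \<le> ereal (real_of_ereal (f b) - bf b w + qf bf w - qf bf z)" if "b \<in> dom_fn f" for b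
  proof -
    have "conj_at bf g (- z) \<le> ereal (real_of_ereal (f b) - bf b w + qf bf w - qf bf z)"
      by (rule conj_at_le[OF pg]) (rule bound[OF that])
    with g_conj[of z] show ?thesis by (rule order_trans)
  qed
  have "bf b w - real_of_ereal (f b) \<le> qf bf w" if "b \<in> dom_fn f" for b
    using order_trans[OF g_q[of z] gz[OF that]] by simp
  hence "f w \<le> ereal (qf bf w)" using f_conj[of w] conj_at_le[OF pf] by (blast intro: order_trans)
  hence fw: "f w = ereal (qf bf w)" using f_q[of w] by (rule antisym)
  thus "w \<in> Pq bf f" by (simp add: Pq_def)
  have "w \<in> dom_fn f" using fw by (simp add: dom_fn_def)
  from gz[OF this] have "g z \<le> ereal (- qf bf z)" using fw by (simp add: qf_def)
  thus "z \<in> Nq bf g" using g_q[of z] by (simp add: Nq_def antisym)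
qed

section \<open>SSDB spaces\<close>

lemma SSDB_bilinear: "SSDB bf \<Longrightarrow> bilinear bf"
  and SSDB_symmetric: "SSDB bf \<Longrightarrow> bf b c = bf c b"
  unfolding SSDB_def by auto

lemma SSDB_representation:
  assumes "SSDB bf" "bounded_linear l"
  shows "\<exists>z. \<forall>b. l b = bf b z"
proof -
  obtain \<iota> :: "'a \<Rightarrow> ('a \<Rightarrow>\<^sub>L real)" where "surj \<iota>" and \<iota>: "\<And>b c. blinfun_apply (\<iota> c) b = bf b c"
    using assms(1) unfolding SSDB_def by blast
  then obtain z where z: "Blinfun l = \<iota> z" by (metis surjD)
  have "l b = bf b z" for b
  proof -
    have "l b = blinfun_apply (Blinfun l) b" by (simp add: bounded_linear_Blinfun_apply[OF assms(2)])
    thus ?thesis unfolding z \<iota> .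
  qed
  thus ?thesis by blast
qed

lemma SSDB_continuous_on_left:
  assumes "SSDB bf"
  shows "continuous_on UNIV (\<lambda>b. bf b c)"
proof -
  obtain \<iota> :: "'a \<Rightarrow> ('a \<Rightarrow>\<^sub>L real)" where \<iota>: "\<And>b c. blinfun_apply (\<iota> c) b = bf b c"
    using assms unfolding SSDB_def by blast
  have "(\<lambda>b. bf b c) = blinfun_apply (\<iota> c)" using \<iota> by auto
  thus ?thesis by (simp add: linear_continuous_on blinfun.bounded_linear_right)
qed

lemma qf_add:
  assumes "bilinear bf" "\<And>b c. bf b c = bf c b"
  shows "qf bf (a + b) = qf bf a + bf a b + qf bf b"
  using assms(2)[of b a] unfolding qf_def
  by (simp add: bilinear_ladd[OF assms(1)] bilinear_radd[OF assms(1)] field_simps)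

lemma SSDB_BC_TBC_conj_bound:
  assumes ssdb: "SSDB bf"
    and pf: "proper_fn f" and cf: "convex_fn f" and lf: "lsc_fn f" and f: "BC_fn bf f"
    and pg: "proper_fn g" and cg: "convex_fn g" and lg: "lsc_fn g" and g: "TBC_fn bf g"
    and dom: "\<And>u. \<exists>x\<in>dom_fn f. \<exists>y\<in>dom_fn g. u = x - y"
  shows "\<exists>z. \<forall>b\<in>dom_fn f. \<forall>y\<in>dom_fn g.
    bf y (- z) - real_of_ereal (g y) \<le> real_of_ereal (f b) - bf b (z + c) + qf bf (z + c) - qf bf z"
proof -
  have bil: "bilinear bf" and sym: "\<And>b c. bf b c = bf c b"
    using SSDB_bilinear SSDB_symmetric ssdb by auto
  note bl = bilinear_ladd[OF bil] bilinear_radd[OF bil] bilinear_lsub[OF bil] bilinear_lneg[OF bil]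
    bilinear_rneg[OF bil]
  define F where "F b = real_of_ereal (f b) + (qf bf c - bf b c)" for b
  define G where "G y = real_of_ereal (g y)" for y
  interpret convex_diff_pair "dom_fn f" "dom_fn g" F G
  proof
    have "linear (\<lambda>b. bf b c)" using bil by (simp add: bilinear_def)
    thus "convex_on (dom_fn f) F" unfolding F_def
      using convex_on_dom_fn[OF pf cf] by (intro convex_on_add convex_on_const_minus_linear convex_on_imp_convex)
    show "closed {x \<in> dom_fn f. F x \<le> r}" for r unfolding F_def
      using ssdb by (intro closed_sublevel_dom_fn pf lf continuous_intros SSDB_continuous_on_left)
    show "convex_on (dom_fn g) G" unfolding G_def by (rule convex_on_dom_fn[OF pg cg])
    show "closed {x \<in> dom_fn g. G x \<le> r}" for r
      using closed_sublevel_dom_fn[OF pg lg, of "\<lambda>_. 0" r] by (simp add: G_def)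
  qed (fact dom)
  have "0 \<le> F x + G y" if "x \<in> dom_fn f" "y \<in> dom_fn g" "x - y = c" for x y
  proof -
    have "qf bf x \<le> real_of_ereal (f x)" and "- qf bf y \<le> real_of_ereal (g y)"
      using f g dom_fn_real[OF that(1)] dom_fn_real[OF that(2)]
      by (auto simp: BC_fn_def TBC_fn_def) (metis ereal_less_eq(3))+
    moreover have "x = y + c" using that(3) by (metis add.commute diff_add_cancel)
    ultimately show ?thesis
      using qf_add[OF bil sym, of y c] unfolding F_def G_def qf_def by (simp add: bl)
  qed
  then obtain l where l: "bounded_linear l" "\<And>x y. x \<in> dom_fn f \<Longrightarrow> y \<in> dom_fn g \<Longrightarrow> l (x - y - c) \<le> F x + G y"
    using attouch_brezis_separation_at by blast
  obtain z where z: "\<And>b. l b = bf b z" using SSDB_representation[OF ssdb l(1)] by blast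
  have "bf y (- z) - real_of_ereal (g y) \<le> real_of_ereal (f b) - bf b (z + c) + qf bf (z + c) - qf bf z"
    if "b \<in> dom_fn f" "y \<in> dom_fn g" for b y
    using l(2)[OF that] qf_add[OF bil sym, of z c] sym[of c z] unfolding z F_def G_def by (simp add: bl)
  thus ?thesis by blast
qed

theorem theorem4p6:
  fixes bf :: "'a::banach \<Rightarrow> 'a \<Rightarrow> real"
    and f g :: "'a \<Rightarrow> ereal"
  assumes "SSDB bf"
    and "proper_fn f" and "convex_fn f" and "lsc_fn f" and "BC_fn bf f"
    and "proper_fn g" and "convex_fn g" and "lsc_fn g" and "TBC_fn bf g"
  shows "{x - y | x y. x \<in> dom_fn f \<and> y \<in> dom_fn g} = UNIV \<longleftrightarrow>
         {x - y | x y. x \<in> Pq bf f \<and> y \<in> Nq bf g} = UNIV"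
proof
  assume "{x - y | x y. x \<in> Pq bf f \<and> y \<in> Nq bf g} = UNIV"
  moreover have "Pq bf f \<subseteq> dom_fn f" "Nq bf g \<subseteq> dom_fn g" by (auto simp: Pq_def Nq_def dom_fn_def)
  ultimately show "{x - y | x y. x \<in> dom_fn f \<and> y \<in> dom_fn g} = UNIV" by blast
next
  assume "{x - y | x y. x \<in> dom_fn f \<and> y \<in> dom_fn g} = UNIV"
  hence "u \<in> {x - y | x y. x \<in> dom_fn f \<and> y \<in> dom_fn g}" for u by simp
  hence dom: "\<exists>x\<in>dom_fn f. \<exists>y\<in>dom_fn g. u = x - y" for u by blast
  have "c \<in> {x - y | x y. x \<in> Pq bf f \<and> y \<in> Nq bf g}" for c
  proof -
    obtain z where "\<forall>b\<in>dom_fn f. \<forall>y\<in>dom_fn g.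
        bf y (- z) - real_of_ereal (g y) \<le> real_of_ereal (f b) - bf b (z + c) + qf bf (z + c) - qf bf z"
      using SSDB_BC_TBC_conj_bound[OF assms dom] by blast
    hence "z + c \<in> Pq bf f" "z \<in> Nq bf g" using Pq_Nq_if_conj_bound[OF assms(5,9)] by blast+
    thus ?thesis by force
  qed
  thus "{x - y | x y. x \<in> Pq bf f \<and> y \<in> Nq bf g} = UNIV" by blast
qed

end
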